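(* Let $\pi\in\mathfrak{S}_n$ avoid $231$. Let $A,B,C$ be the blocks of a collection of crossing $3$-cycles of $\pi$ (so $A<B<C$), and let $(e_1,f_1)$ and $(e_2,f_2)$ be $2$-cycles of $\pi$ with $e_1<f_1<e_2<f_2$. Then neither of the following configurations occurs: (1) $A<e_1<f_1<e_2<B<f_2<C$; (2) $A<e_1<B<f_1<e_2<f_2<C$.
   Context: A permutation avoids $231$ if there are no indices $i<j<k$ with $\pi_k<\pi_i<\pi_j$. A collection of crossing $3$-cycles of $\pi$ is a nonempty set of $3$-cycles $(a_i,c_i,b_i)$ (meaning $a_i\mapsto c_i\mapsto b_i\mapsto a_i$) of $\pi$ with $a_i<b_i<c_i$, such that $a_i<b_j<c_k$ for all $i,j,k$; its blocks are $A=\{a_i\}$, $B=\{b_i\}$, $C=\{c_i\}$. For sets $S,T$ and an element $t$, $S<T$ means every element of $S$ is less than every element of $T$, and $S<t$ (resp. $t<S$) means every element of $S$ is less (resp. greater) than $t$. *)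

theory Defs
  imports "HOL-Combinatorics.Permutations"
begin

definition avoids231 :: "(nat \<Rightarrow> nat) \<Rightarrow> nat \<Rightarrow> bool" where
  "avoids231 \<pi> n \<longleftrightarrow>
     \<not> (\<exists>i j k. 1 \<le> i \<and> i < j \<and> j < k \<and> k \<le> n \<and> \<pi> k < \<pi> i \<and> \<pi> i < \<pi> j)"

text \<open>A triple (a,b,c) with a<b<c is a 3-cycle (a,c,b) of pi: a maps to c, c to b, b to a.\<close>
definition is_3cycle_acb :: "(nat \<Rightarrow> nat) \<Rightarrow> nat \<times> nat \<times> nat \<Rightarrow> bool" where
  "is_3cycle_acb \<pi> t \<longleftrightarrow> (case t of (a, b, c) \<Rightarrow>
      a < b \<and> b < c \<and> \<pi> a = c \<and> \<pi> c = b \<and> \<pi> b = a)"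

definition crossing_3cycles :: "(nat \<Rightarrow> nat) \<Rightarrow> (nat \<times> nat \<times> nat) set \<Rightarrow> bool" where
  "crossing_3cycles \<pi> K \<longleftrightarrow> K \<noteq> {} \<and> (\<forall>t\<in>K. is_3cycle_acb \<pi> t) \<and>
     (\<forall>(a1, b1, c1)\<in>K. \<forall>(a2, b2, c2)\<in>K. \<forall>(a3, b3, c3)\<in>K. a1 < b2 \<and> b2 < c3)"

definition blockA :: "(nat \<times> nat \<times> nat) set \<Rightarrow> nat set" where
  "blockA K = (\<lambda>(a, b, c). a) ` K"
definition blockB :: "(nat \<times> nat \<times> nat) set \<Rightarrow> nat set" where
  "blockB K = (\<lambda>(a, b, c). b) ` K"
definition blockC :: "(nat \<times> nat \<times> nat) set \<Rightarrow> nat set" where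
  "blockC K = (\<lambda>(a, b, c). c) ` K"

definition is_2cycle :: "(nat \<Rightarrow> nat) \<Rightarrow> nat \<Rightarrow> nat \<Rightarrow> bool" where
  "is_2cycle \<pi> e f \<longleftrightarrow> e < f \<and> \<pi> e = f \<and> \<pi> f = e"

definition set_lt :: "nat set \<Rightarrow> nat set \<Rightarrow> bool" where
  "set_lt S T \<longleftrightarrow> (\<forall>s\<in>S. \<forall>t\<in>T. s < t)"
definition set_lt_elt :: "nat set \<Rightarrow> nat \<Rightarrow> bool" where
  "set_lt_elt S t \<longleftrightarrow> (\<forall>s\<in>S. s < t)"
definition elt_lt_set :: "nat \<Rightarrow> nat set \<Rightarrow> bool" where
  "elt_lt_set t S \<longleftrightarrow> (\<forall>s\<in>S. t < s)"

end

theory Submission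
  imports Defs
begin

text \<open>Two 2-cycles (e1,f1), (e2,f2) with e1 < e2 and f1 < f2 supply the "23" of a 231 pattern
  at positions e1 < e2. In configuration (1) the position b > e2 completes it, since
  \<pi> b = a < f1; in configuration (2) the position c > e2 does, since \<pi> c = b < f1.\<close>

lemma permutes_moved_in_interval:
  assumes "\<pi> permutes {1..n}" and "\<pi> x \<noteq> x"
  shows "1 \<le> x" "x \<le> n"
  using permutes_not_in[OF assms(1)] assms(2) by auto

lemma avoids231_no_moved_pattern:
  assumes perm: "\<pi> permutes {1..n}" and avoid: "avoids231 \<pi> n"
    and moved: "\<pi> i \<noteq> i" "\<pi> k \<noteq> k"
    and pos: "i < j" "j < k"
    and val: "\<pi> k < \<pi> i" "\<pi> i < \<pi> j"
  shows False
  using avoid pos val permutes_moved_in_interval[OF perm moved(1)]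
    permutes_moved_in_interval[OF perm moved(2)]
  unfolding avoids231_def by blast

lemma avoids231_no_2cycles_opening_between:
  assumes perm: "\<pi> permutes {1..n}" and avoid: "avoids231 \<pi> n"
    and cyc: "is_3cycle_acb \<pi> (a, b, c)" "is_2cycle \<pi> e1 f1" "is_2cycle \<pi> e2 f2"
    and ord: "a < e1" "f1 < e2" "e2 < b"
  shows False
proof -
  have "\<pi> b = a" "a < b" "e1 < f1" "\<pi> e1 = f1" "\<pi> e2 = f2" "e2 < f2"
    using cyc unfolding is_3cycle_acb_def is_2cycle_def by auto
  with ord show False
    by (intro avoids231_no_moved_pattern[OF perm avoid, of e1 b e2]) auto
qed

lemma avoids231_no_2cycles_closing_between:
  assumes perm: "\<pi> permutes {1..n}" and avoid: "avoids231 \<pi> n"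
    and cyc: "is_3cycle_acb \<pi> (a, b, c)" "is_2cycle \<pi> e1 f1" "is_2cycle \<pi> e2 f2"
    and ord: "b < f1" "f1 < e2" "f2 < c"
  shows False
proof -
  have "\<pi> c = b" "b < c" "e1 < f1" "\<pi> e1 = f1" "\<pi> e2 = f2" "e2 < f2"
    using cyc unfolding is_3cycle_acb_def is_2cycle_def by auto
  with ord show False
    by (intro avoids231_no_moved_pattern[OF perm avoid, of e1 c e2]) auto
qed

lemma crossing_3cycles_obtain_member:
  assumes "crossing_3cycles \<pi> K"
  obtains a b c where "is_3cycle_acb \<pi> (a, b, c)"
    "a \<in> blockA K" "b \<in> blockB K" "c \<in> blockC K"
proof -
  obtain a b c where t: "(a, b, c) \<in> K"
    using assms unfolding crossing_3cycles_def by auto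
  then have "is_3cycle_acb \<pi> (a, b, c)"
    using assms unfolding crossing_3cycles_def by blast
  moreover have "a \<in> blockA K" "b \<in> blockB K" "c \<in> blockC K"
    using t unfolding blockA_def blockB_def blockC_def by force+
  ultimately show thesis using that by blast
qed

theorem lemma3p5:
  fixes \<pi> :: "nat \<Rightarrow> nat" and n :: nat and K :: "(nat \<times> nat \<times> nat) set"
    and e1 f1 e2 f2 :: nat
  assumes perm: "\<pi> permutes {1..n}"
    and avoid: "avoids231 \<pi> n"
    and cross: "crossing_3cycles \<pi> K"
    and cyc1: "is_2cycle \<pi> e1 f1"
    and cyc2: "is_2cycle \<pi> e2 f2"
    and ord: "e1 < f1" "f1 < e2" "e2 < f2"
  shows "\<not> (set_lt_elt (blockA K) e1 \<and> e1 < f1 \<and> f1 < e2 \<and> elt_lt_set e2 (blockB K)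
            \<and> set_lt_elt (blockB K) f2 \<and> elt_lt_set f2 (blockC K))
       \<and> \<not> (set_lt_elt (blockA K) e1 \<and> elt_lt_set e1 (blockB K) \<and> set_lt_elt (blockB K) f1
            \<and> f1 < e2 \<and> e2 < f2 \<and> elt_lt_set f2 (blockC K))"
proof -
  obtain a b c where t: "is_3cycle_acb \<pi> (a, b, c)"
    and blocks: "a \<in> blockA K" "b \<in> blockB K" "c \<in> blockC K"
    using crossing_3cycles_obtain_member[OF cross] .
  show ?thesis
  proof (intro conjI notI)
    assume "set_lt_elt (blockA K) e1 \<and> e1 < f1 \<and> f1 < e2 \<and> elt_lt_set e2 (blockB K)
            \<and> set_lt_elt (blockB K) f2 \<and> elt_lt_set f2 (blockC K)"
    then have "a < e1" "e2 < b"
      using blocks unfolding set_lt_elt_def elt_lt_set_def by auto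
    then show False
      using avoids231_no_2cycles_opening_between[OF perm avoid t cyc1 cyc2] ord by blast
  next
    assume "set_lt_elt (blockA K) e1 \<and> elt_lt_set e1 (blockB K) \<and> set_lt_elt (blockB K) f1
            \<and> f1 < e2 \<and> e2 < f2 \<and> elt_lt_set f2 (blockC K)"
    then have "b < f1" "f2 < c"
      using blocks unfolding set_lt_elt_def elt_lt_set_def by auto
    then show False
      using avoids231_no_2cycles_closing_between[OF perm avoid t cyc1 cyc2] ord by blast
  qed
qed

end
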